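(* For every $f\in G_{\mathcal S}$, let $\mathcal R(f):=\big(f^{\circ-1}\big)^{\vdash-1}$, where $f^{\circ-1}$ is the inverse of $f$ for $\circ$ and $h^{\vdash-1}$ denotes the inverse of $h$ for $\vdash$. Then $$f=\mathcal R(f)\dashv f.$$
   Context: A reduced plane tree is a rooted plane tree in which every internal node has at least two children (a single leaf is allowed). Trees are encoded as words in noncommuting letters $S_0,S_1,\dots$ by reading nodes in preorder and writing $S_{k-1}$ for a node with $k$ children (a leaf is $S_0$); series are formal linear combinations of such words. For a tree $t_0$ with $n$ leaves and trees $t_1,\dots,t_n$, $t_0\circ(t_1,\dots,t_n)$ is obtained by replacing the leaves of $t_0$, from left to right, by $t_1,\dots,t_n$; this is extended multilinearly to series. The Schröder group $G_{\mathcal S}$ consists of series $p=S_0+\sum_{n\ge2}p_n$, $p_n$ a finite linear combination of trees with $n$ leaves, with product $p\circ q=q+\sum_{n\ge2}p_n\circ(q,\dots,q)$ (a group with identity $S_0$). For $f=S_0+\sum_{n\ge2}f_n$ and $g$ in $G_{\mathcal S}$ define $$f\dashv g=S_0+\sum_{n\ge2}f_n\circ(\underbrace{g,\dots,g}_{n-1},S_0),\qquad f\vdash g=g+\sum_{n\ge2}f_n\circ(\underbrace{S_0,\dots,S_0}_{n-1},g).$$ $G_{\mathcal S}$ is a group under $\vdash$ with identity $S_0$. *)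

theory Defs
  imports Main
begin

text \<open>A leaf is a node
with no children (the letter S_0); a node with k children is the letter S_(k-1).
The preorder word encoding is a bijection onto this datatype.\<close>

datatype tree = Node "tree list"

abbreviation Leaf :: tree where "Leaf \<equiv> Node []"

fun reduced :: "tree \<Rightarrow> bool" where
  "reduced (Node cs) = ((cs = [] \<or> 2 \<le> length cs) \<and> (\<forall>c\<in>set cs. reduced c))"

fun leaves :: "tree \<Rightarrow> nat" where
  "leaves (Node cs) = (if cs = [] then 1 else sum_list (map leaves cs))"

text \<open>Grafting: t0 with n leaves, list ts of n trees; the leaves of t0 are
replaced from left to right by the elements of ts.\<close>

function graft :: "tree \<Rightarrow> tree list \<Rightarrow> tree" where
  "graft (Node cs) ts =
     (if cs = [] then hd ts
      else Node (map (\<lambda>i. graft (cs ! i)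
                  (take (leaves (cs ! i)) (drop (sum_list (map leaves (take i cs))) ts)))
                [0..<length cs]))"
  by pat_completeness auto
termination
proof (relation "measure (\<lambda>(t, ts). size t)")
  show "wf (measure (\<lambda>(t, ts). size t))" by simp
next
  fix cs :: "tree list" and ts :: "tree list" and i
  assume "i \<in> set [0..<length cs]"
  then have "cs ! i \<in> set cs" by simp
  then have "size (cs ! i) < Suc (size_list size cs)"
    using size_list_estimation' by (metis le_imp_less_Suc order_refl)
  then show "((cs ! i, take (leaves (cs ! i)) (drop (sum_list (map leaves (take i cs))) ts)),
              Node cs, ts) \<in> measure (\<lambda>(t, ts). size t)" by simp
qed

text \<open>Series: formal (possibly infinite) linear combinations of trees, i.e.
coefficient functions. Only reduced trees may carry nonzero coefficients.\<close>

type_synonym 'a series = "tree \<Rightarrow> 'a"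

definition S0 :: "'a::field series" where
  "S0 = (\<lambda>t. if t = Leaf then 1 else 0)"

definition splus :: "'a::field series \<Rightarrow> 'a series \<Rightarrow> 'a series" where
  "splus p q = (\<lambda>t. p t + q t)"

text \<open>The Schroeder group: series S_0 + sum_{n>=2} p_n supported on reduced trees.
(Only S_0 is a reduced tree with one leaf; each p_n is automatically a finite
combination since there are finitely many reduced trees with n leaves.)\<close>

definition GS :: "'a::field series set" where
  "GS = {p. p Leaf = 1 \<and> (\<forall>t. p t \<noteq> 0 \<longrightarrow> reduced t)}"

text \<open>Multilinear substitution into the components of degree n >= 2:
  sum_{n>=2} p_n \<circ> (Q n 0, ..., Q n (n-1)).\<close>

definition subst :: "'a::field series \<Rightarrow> (nat \<Rightarrow> nat \<Rightarrow> 'a series) \<Rightarrow> 'a series" where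
  "subst p Q = (\<lambda>t. \<Sum>(t0, ts) \<in> {(t0, ts). 2 \<le> leaves t0 \<and> length ts = leaves t0 \<and> graft t0 ts = t}.
                    p t0 * (\<Prod>i<leaves t0. Q (leaves t0) i (ts ! i)))"

definition comp :: "'a::field series \<Rightarrow> 'a series \<Rightarrow> 'a series" where
  "comp p q = splus q (subst p (\<lambda>n i. q))"

definition dashv :: "'a::field series \<Rightarrow> 'a series \<Rightarrow> 'a series" where
  "dashv f g = splus S0 (subst f (\<lambda>n i. if i < n - 1 then g else S0))"

definition vdash :: "'a::field series \<Rightarrow> 'a series \<Rightarrow> 'a series" where
  "vdash f g = splus g (subst f (\<lambda>n i. if i < n - 1 then S0 else g))"

definition comp_inv :: "'a::field series \<Rightarrow> 'a series" where
  "comp_inv f = (THE h. h \<in> GS \<and> comp f h = S0 \<and> comp h f = S0)"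

definition vdash_inv :: "'a::field series \<Rightarrow> 'a series" where
  "vdash_inv f = (THE h. h \<in> GS \<and> vdash f h = S0 \<and> vdash h f = S0)"

definition RR :: "'a::field series \<Rightarrow> 'a series" where
  "RR f = vdash_inv (comp_inv f)"

end

theory Submission
  imports Defs "HOL-Library.FuncSet" "HOL-Algebra.Group"
begin

text \<open>Every operation in sight is an instance of one full substitution
  \<open>subst_full p Q = \<Sum>\<^sub>n p\<^sub>n \<circ> (Q n 0, \<dots>, Q n (n-1))\<close>, including the degree-one part, and
  substitution is associative: substituting into a substitution is substituting the substituted
  families, provided the families match position by position. This yields associativity of
  \<open>\<circ>\<close> and \<open>\<turnstile>\<close>, the identities \<open>(p \<stileturn> q) \<stileturn> r = p \<stileturn> (q \<circ> r)\<close> and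
  \<open>(p \<stileturn> q) \<turnstile> q = p \<circ> q\<close>, and right inverses are built degree by degree, so \<open>G\<^sub>S\<close> is a
  group for \<open>\<circ>\<close> and for \<open>\<turnstile>\<close>. With \<open>g = f\<^sup>\<circ>\<^sup>-\<^sup>1\<close> the second identity gives
  \<open>(f \<stileturn> g) \<turnstile> g = S\<^sub>0\<close>, i.e. \<open>\<R>(f) = f \<stileturn> g\<close>, and the first gives
  \<open>\<R>(f) \<stileturn> f = f \<stileturn> (g \<circ> f) = f\<close>.\<close>

section \<open>Splitting a list into consecutive blocks\<close>

fun chunks :: "nat list \<Rightarrow> 'b list \<Rightarrow> 'b list list" where
  "chunks [] xs = []"
| "chunks (m # ms) xs = take m xs # chunks ms (drop m xs)"

lemma length_chunks [simp]: "length (chunks ms xs) = length ms"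
  by (induction ms arbitrary: xs) auto

lemma chunks_eq_Nil_iff [simp]: "chunks ms xs = [] \<longleftrightarrow> ms = []"
  by (cases ms) auto

lemma concat_chunks: "length xs = sum_list ms \<Longrightarrow> concat (chunks ms xs) = xs"
  by (induction ms arbitrary: xs) auto

lemma map_length_chunks: "length xs = sum_list ms \<Longrightarrow> map length (chunks ms xs) = ms"
  by (induction ms arbitrary: xs) (auto simp: min_def)

lemma length_nth_chunks:
  "length xs = sum_list ms \<Longrightarrow> i < length ms \<Longrightarrow> length (chunks ms xs ! i) = ms ! i"
  by (metis length_chunks map_length_chunks nth_map)

lemma chunks_concat: "chunks (map length xss) (concat xss) = xss"
  by (induction xss) auto

lemma nth_chunks:
  "i < length ms \<Longrightarrow> chunks ms xs ! i = take (ms ! i) (drop (sum_list (take i ms)) xs)"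
proof (induction ms arbitrary: xs i)
  case (Cons m ms)
  then show ?case by (cases i) (auto simp: drop_drop add.commute)
qed simp

lemma set_chunks: "ys \<in> set (chunks ms xs) \<Longrightarrow> set ys \<subseteq> set xs"
  by (induction ms arbitrary: xs) (auto dest: in_set_takeD in_set_dropD)

lemma chunks_map: "chunks ms (map f xs) = map (map f) (chunks ms xs)"
  by (induction ms arbitrary: xs) (auto simp: take_map drop_map)

lemma chunks_map2: "chunks ms (map2 f xs ys) = map2 (map2 f) (chunks ms xs) (chunks ms ys)"
  by (induction ms arbitrary: xs ys) (auto simp: take_map drop_map take_zip drop_zip)

lemma chunks_replicate: "chunks ms (replicate (sum_list ms) x) = map (\<lambda>m. replicate m x) ms"
  by (induction ms) (auto simp: replicate_add)

lemma chunks_concat_chunks: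
  assumes "length wss = sum_list ms"
  shows "chunks (map (\<lambda>ws. sum_list (map length ws)) (chunks ms wss)) (concat wss)
    = map concat (chunks ms wss)"
  using assms
proof (induction ms arbitrary: wss)
  case (Cons m ms)
  have split: "concat wss = concat (take m wss) @ concat (drop m wss)"
    by (metis append_take_drop_id concat_append)
  have "sum_list (map length (take m wss)) = length (concat (take m wss))"
    by (simp add: length_concat)
  then show ?case
    using Cons split by simp
qed simp

lemma block_position_less_last_iff:
  fixes ms :: "nat list"
  assumes pos: "\<forall>m\<in>set ms. 0 < m" and i: "i < length ms" and j: "j < ms ! i"
  shows "sum_list (take i ms) + j < sum_list ms - 1 \<longleftrightarrow> i < length ms - 1 \<or> j < ms ! i - 1"
proof -
  have total: "sum_list ms = sum_list (take i ms) + ms ! i + sum_list (drop (Suc i) ms)"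
    using i by (metis add.assoc id_take_nth_drop sum_list_append sum_list_simps(2))
  show ?thesis
  proof (cases "i < length ms - 1")
    case True
    then obtain a r where ar: "drop (Suc i) ms = a # r"
      by (cases "drop (Suc i) ms") auto
    then have "0 < a" using pos by (metis in_set_dropD list.set_intros(1))
    then have "1 \<le> sum_list (drop (Suc i) ms)" using ar by simp
    then show ?thesis using total j True by linarith
  next
    case False
    then have "sum_list ms = sum_list (take i ms) + ms ! i" using total by simp
    then show ?thesis using j False by arith
  qed
qed

lemma sum_list_map_concat:
  "sum_list (map f (concat xss)) = sum_list (map (\<lambda>xs. sum_list (map f xs)) xss)"
  by (induction xss) auto

lemma prod_lessThan_add:
  fixes f :: "nat \<Rightarrow> 'a::comm_monoid_mult"
  shows "(\<Prod>k<a + b. f k) = (\<Prod>k<a. f k) * (\<Prod>k<b. f (a + k))"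
  by (induction b) (simp_all add: mult.assoc)

lemma prod_concat:
  fixes F :: "nat \<Rightarrow> 'b \<Rightarrow> 'a::comm_monoid_mult"
  shows "(\<Prod>k<length (concat xss). F k (concat xss ! k)) =
    (\<Prod>i<length xss. \<Prod>j<length (xss ! i). F (sum_list (take i (map length xss)) + j) (xss ! i ! j))"
proof (induction xss arbitrary: F)
  case (Cons xs xss)
  have "(\<Prod>k<length (concat (xs # xss)). F k (concat (xs # xss) ! k)) =
      (\<Prod>k<length xs. F k (xs ! k)) *
      (\<Prod>k<length (concat xss). F (length xs + k) (concat xss ! k))"
    by (simp add: prod_lessThan_add) (intro arg_cong2[where f = times] prod.cong; simp add: nth_append)
  also have "\<dots> = (\<Prod>k<length xs. F k (xs ! k)) *
      (\<Prod>i<length xss. \<Prod>j<length (xss ! i).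
          F (length xs + (sum_list (take i (map length xss)) + j)) (xss ! i ! j))"
    using Cons.IH[of "\<lambda>k. F (length xs + k)"] by simp
  finally show ?case
    unfolding length_Cons prod.lessThan_Suc_shift by (simp add: add.assoc)
qed simp

section \<open>Grafting trees\<close>

lemma leaves_pos: "0 < leaves t"
proof (induction t)
  case (Node cs)
  show ?case
  proof (cases cs)
    case (Cons c cs')
    then have "leaves c \<le> sum_list (map leaves cs)" by simp
    then show ?thesis using Node.IH Cons by fastforce
  qed simp
qed

lemma graft_Leaf [simp]: "graft Leaf ts = hd ts"
  by (simp add: graft.simps)

lemma graft_Node: "cs \<noteq> [] \<Longrightarrow> graft (Node cs) ts = Node (map2 graft cs (chunks (map leaves cs) ts))"
  by (subst graft.simps) (auto intro!: nth_equalityI simp: nth_chunks take_map)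

declare graft.simps [simp del]

lemma graft_Node_neq_Leaf: "cs \<noteq> [] \<Longrightarrow> graft (Node cs) ts \<noteq> Leaf"
  by (simp add: graft_Node)

lemma leaves_graft:
  "length ts = leaves t0 \<Longrightarrow> leaves (graft t0 ts) = sum_list (map leaves ts)"
proof (induction t0 arbitrary: ts)
  case (Node cs)
  show ?case
  proof (cases "cs = []")
    case True
    then obtain u where "ts = [u]" using Node.prems by (cases ts) auto
    then show ?thesis using True by simp
  next
    case False
    define css where "css = chunks (map leaves cs) ts"
    have lts: "length ts = sum_list (map leaves cs)" using Node.prems False by simp
    have "map leaves (map2 graft cs css) = map (\<lambda>u. sum_list (map leaves u)) css"
      using Node.IH length_nth_chunks[OF lts] by (auto intro!: nth_equalityI simp: css_def)
    moreover have "css \<noteq> []" using False by (simp add: css_def)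
    ultimately have "leaves (graft (Node cs) ts) = sum_list (map leaves (concat css))"
      using False by (simp add: graft_Node css_def[symmetric] sum_list_map_concat)
    then show ?thesis using concat_chunks[OF lts] by (simp add: css_def)
  qed
qed

lemma graft_assoc:
  "length ts = leaves t0 \<Longrightarrow> map length wss = map leaves ts \<Longrightarrow>
    graft (graft t0 ts) (concat wss) = graft t0 (map2 graft ts wss)"
proof (induction t0 arbitrary: ts wss)
  case (Node cs)
  show ?case
  proof (cases "cs = []")
    case True
    then obtain u where u: "ts = [u]" using Node.prems(1) by (cases ts) auto
    then obtain w where "wss = [w]" using Node.prems(2) by (cases wss) auto
    then show ?thesis using True u by simp
  next
    case False
    define ms where "ms = map leaves cs"
    define css where "css = chunks ms ts"
    define wsc where "wsc = chunks ms wss"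
    have lts: "length ts = sum_list ms" using Node.prems False by (simp add: ms_def)
    have lwss: "length wss = sum_list ms" using lts Node.prems(2) by (metis length_map)
    have len: "i < length cs \<Longrightarrow> length (css ! i) = leaves (cs ! i)" for i
      using length_nth_chunks[OF lts] by (simp add: css_def ms_def)
    have wsc_css: "i < length cs \<Longrightarrow> map length (wsc ! i) = map leaves (css ! i)" for i
      using arg_cong[OF Node.prems(2), of "\<lambda>xs. chunks ms xs ! i"]
      by (simp add: wsc_def css_def chunks_map ms_def)
    have "map leaves (map2 graft cs css) = map (\<lambda>ws. sum_list (map length ws)) wsc"
      using leaves_graft[OF len] wsc_css by (auto intro!: nth_equalityI simp: css_def wsc_def ms_def)
    then have concat_wss: "chunks (map leaves (map2 graft cs css)) (concat wss) = map concat wsc"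
      using chunks_concat_chunks[OF lwss] by (simp add: wsc_def)
    have ne: "map2 graft cs css \<noteq> []" using False by (simp add: css_def ms_def)
    have "graft (graft (Node cs) ts) (concat wss) = graft (Node (map2 graft cs css)) (concat wss)"
      using False by (simp add: graft_Node css_def ms_def)
    also have "\<dots> = Node (map2 graft (map2 graft cs css) (map concat wsc))"
      unfolding graft_Node[OF ne] concat_wss ..
    also have "map2 graft (map2 graft cs css) (map concat wsc) = map2 graft cs (map2 (map2 graft) css wsc)"
      using Node.IH[OF nth_mem len wsc_css] by (auto intro!: nth_equalityI simp: css_def wsc_def ms_def)
    also have "map2 (map2 graft) css wsc = chunks ms (map2 graft ts wss)"
      by (simp add: chunks_map2 css_def wsc_def)
    finally show ?thesis
      using False by (simp add: graft_Node ms_def)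
  qed
qed

lemma graft_replicate_Leaf: "graft t (replicate (leaves t) Leaf) = t"
proof (induction t)
  case (Node cs)
  then show ?case
    by (cases "cs = []")
      (auto intro!: nth_equalityI simp: graft_Node chunks_replicate[of "map leaves cs", simplified])
qed

lemma reduced_imp_leaves_ge_2: "reduced t \<Longrightarrow> t \<noteq> Leaf \<Longrightarrow> 2 \<le> leaves t"
proof (cases t)
  case (Node cs)
  assume "reduced t" "t \<noteq> Leaf"
  then have "2 \<le> length cs" "cs \<noteq> []" using Node by auto
  moreover have "length cs \<le> sum_list (map leaves cs)"
    using sum_list_mono[of cs "\<lambda>_. 1" leaves] leaves_pos by (simp add: Suc_leI sum_list_triv)
  ultimately show ?thesis using Node by simp
qed

lemma reduced_graft:
  "length ts = leaves t0 \<Longrightarrow> reduced t0 \<Longrightarrow> \<forall>u\<in>set ts. reduced u \<Longrightarrow> reduced (graft t0 ts)"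
proof (induction t0 arbitrary: ts)
  case (Node cs)
  show ?case
  proof (cases "cs = []")
    case True
    then obtain u where "ts = [u]" using Node.prems by (cases ts) auto
    then show ?thesis using True Node.prems by simp
  next
    case False
    define css where "css = chunks (map leaves cs) ts"
    have lts: "length ts = sum_list (map leaves cs)" using Node.prems False by simp
    have "reduced (graft (cs ! i) (css ! i))" if i: "i < length cs" for i
    proof (rule Node.IH)
      show "length (css ! i) = leaves (cs ! i)" using length_nth_chunks[OF lts] i by (simp add: css_def)
      have "css ! i \<in> set css" using i by (simp add: css_def)
      then have "set (css ! i) \<subseteq> set ts" unfolding css_def by (rule set_chunks)
      then show "\<forall>u\<in>set (css ! i). reduced u" using Node.prems(3) by blast
    qed (use i Node.prems(2) in auto)
    then show ?thesis using Node.prems(2) False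
      by (simp add: graft_Node css_def[symmetric] all_set_conv_all_nth) (simp add: css_def)
  qed
qed

lemma leaves_less_of_graft:
  assumes "2 \<le> leaves t0" "length ts = leaves t0" "i < length ts"
  shows "leaves (ts ! i) < leaves (graft t0 ts)"
proof -
  define j :: nat where "j = (if i = 0 then 1 else 0)"
  have j: "j < length ts" "j \<noteq> i" using assms by (auto simp: j_def)
  have "(\<Sum>k\<in>{i, j}. leaves (ts ! k)) \<le> (\<Sum>k<length ts. leaves (ts ! k))"
    by (rule sum_mono2) (use assms j in auto)
  also have "\<dots> = leaves (graft t0 ts)"
    using assms leaves_graft by (simp add: sum_list_sum_nth atLeast0LessThan)
  finally show ?thesis using j leaves_pos[of "ts ! j"] by simp
qed

section \<open>Decompositions of a tree\<close>

definition decomps :: "tree \<Rightarrow> (tree \<times> tree list) set" where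
  "decomps t = {(t0, ts). length ts = leaves t0 \<and> graft t0 ts = t}"

lemma size_pos: "0 < size (t::tree)"
  by (cases t) simp

lemma leaves_le_size: "leaves t \<le> size t"
proof (induction t)
  case (Node cs)
  then have "sum_list (map leaves cs) \<le> sum_list (map size cs)"
    by (intro sum_list_mono) auto
  then show ?case by (simp add: size_list_conv_sum_list)
qed

lemma size_graft:
  "length ts = leaves t0 \<Longrightarrow> size t0 \<le> size (graft t0 ts) \<and> (\<forall>u\<in>set ts. size u \<le> size (graft t0 ts))"
proof (induction t0 arbitrary: ts)
  case (Node cs)
  show ?case
  proof (cases "cs = []")
    case True
    then obtain u where "ts = [u]" using Node.prems by (cases ts) auto
    then show ?thesis using True size_pos[of u] by simp
  next
    case False
    define css where "css = chunks (map leaves cs) ts"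
    have lts: "length ts = sum_list (map leaves cs)" using Node.prems False by simp
    have len: "i < length cs \<Longrightarrow> length (css ! i) = leaves (cs ! i)" for i
      using length_nth_chunks[OF lts] by (simp add: css_def)
    have g: "graft (Node cs) ts = Node (map2 graft cs css)"
      using False by (simp add: graft_Node css_def)
    have "sum_list (map size cs) = (\<Sum>i<length cs. size (cs ! i))"
      by (simp add: sum_list_sum_nth atLeast0LessThan)
    also have "\<dots> \<le> (\<Sum>i<length cs. size (graft (cs ! i) (css ! i)))"
      using Node.IH[OF nth_mem len] by (intro sum_mono) auto
    also have "\<dots> = sum_list (map size (map2 graft cs css))"
      by (simp add: sum_list_sum_nth atLeast0LessThan css_def)
    finally have "size (Node cs) \<le> size (graft (Node cs) ts)"
      by (simp add: g size_list_conv_sum_list css_def)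
    moreover have "size u \<le> size (graft (Node cs) ts)" if "u \<in> set ts" for u
    proof -
      have "u \<in> set (concat css)" using \<open>u \<in> set ts\<close> concat_chunks[OF lts] by (simp add: css_def)
      then obtain ys where "ys \<in> set css" "u \<in> set ys" by auto
      then obtain i where i: "i < length cs" and u: "u \<in> set (css ! i)"
        by (auto simp: css_def in_set_conv_nth)
      have "size u \<le> size (graft (cs ! i) (css ! i))"
        using Node.IH[OF nth_mem len] i u by auto
      also have "\<dots> = map size (map2 graft cs css) ! i"
        using i by (simp add: css_def)
      also have "\<dots> \<le> sum_list (map size (map2 graft cs css))"
        using i by (intro elem_le_sum_list) (simp add: css_def)
      finally show ?thesis by (simp add: g size_list_conv_sum_list)
    qed
    ultimately show ?thesis by blast
  qed
qed

lemma finite_size_le: "finite {t::tree. size t \<le> n}"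
proof (induction n)
  case 0
  have "{t::tree. size t \<le> 0} = {}" using size_pos leD by blast
  then show ?case by (metis finite.emptyI)
next
  case (Suc n)
  have "{t::tree. size t \<le> Suc n} \<subseteq> Node ` {cs. set cs \<subseteq> {t. size t \<le> n} \<and> length cs \<le> n}"
  proof
    fix t :: tree assume "t \<in> {t. size t \<le> Suc n}"
    moreover obtain cs where t: "t = Node cs" by (cases t)
    ultimately have s: "sum_list (map size cs) + length cs \<le> n" by (simp add: size_list_conv_sum_list)
    have "size c \<le> n" if "c \<in> set cs" for c
      using member_le_sum_list[of "size c" "map size cs"] that s by simp
    then show "t \<in> Node ` {cs. set cs \<subseteq> {t. size t \<le> n} \<and> length cs \<le> n}"
      using t s by auto
  qed
  moreover have "finite {cs. set cs \<subseteq> {t::tree. size t \<le> n} \<and> length cs \<le> n}"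
    using Suc by (rule finite_lists_length_le)
  ultimately show ?case by (meson finite_imageI finite_subset)
qed

lemma finite_decomps: "finite (decomps t)"
proof (rule finite_subset)
  show "decomps t \<subseteq> {t0. size t0 \<le> size t} \<times> {ts. set ts \<subseteq> {u. size u \<le> size t} \<and> length ts \<le> size t}"
  proof
    fix x assume "x \<in> decomps t"
    then obtain t0 ts where x: "x = (t0, ts)" and l: "length ts = leaves t0" and g: "graft t0 ts = t"
      by (auto simp: decomps_def)
    show "x \<in> {t0. size t0 \<le> size t} \<times> {ts. set ts \<subseteq> {u. size u \<le> size t} \<and> length ts \<le> size t}"
      using size_graft[OF l] leaves_le_size[of t0] l g x by auto
  qed
  show "finite ({t0::tree. size t0 \<le> size t} \<times> {ts. set ts \<subseteq> {u::tree. size u \<le> size t} \<and> length ts \<le> size t})"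
    by (intro finite_cartesian_product finite_size_le finite_lists_length_le)
qed

lemma decomps_Leaf: "decomps Leaf = {(Leaf, [Leaf])}"
proof (intro equalityI subsetI)
  fix x assume "x \<in> decomps Leaf"
  then obtain t0 ts where x: "x = (t0, ts)" "length ts = leaves t0" "graft t0 ts = Leaf"
    by (auto simp: decomps_def)
  then have "t0 = Leaf" using graft_Node_neq_Leaf by (cases t0) blast
  with x show "x \<in> {(Leaf, [Leaf])}" by (auto simp: length_Suc_conv)
qed (simp add: decomps_def)

lemma Leaf_mem_decomps_iff: "(Leaf, ts) \<in> decomps t \<longleftrightarrow> ts = [t]"
  by (cases ts) (auto simp: decomps_def)

section \<open>Full substitution\<close>

definition subst_full :: "'a::field series \<Rightarrow> (nat \<Rightarrow> nat \<Rightarrow> 'a series) \<Rightarrow> 'a series" where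
  "subst_full p Q = (\<lambda>t. \<Sum>(t0, ts)\<in>decomps t. p t0 * (\<Prod>i<leaves t0. Q (leaves t0) i (ts ! i)))"

lemma S0_in_GS: "S0 \<in> GS"
  by (simp add: GS_def S0_def)

lemma GS_one_leaf_eq_S0: "p \<in> GS \<Longrightarrow> leaves t = 1 \<Longrightarrow> p t = S0 t"
  using reduced_imp_leaves_ge_2[of t] by (fastforce simp: GS_def S0_def)

lemma subst_full_eq_subst:
  assumes "p \<in> GS"
  shows "subst_full p Q t = Q 1 0 t + subst p Q t"
proof -
  let ?f = "\<lambda>(t0, ts). p t0 * (\<Prod>i<leaves t0. Q (leaves t0) i (ts ! i))"
  let ?B = "{x. 2 \<le> leaves (fst x)}"
  have "subst_full p Q t = sum ?f (decomps t \<inter> ?B) + sum ?f (decomps t - ?B)"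
    unfolding subst_full_def by (rule sum.Int_Diff[OF finite_decomps])
  moreover have "decomps t \<inter> ?B = {(t0, ts). 2 \<le> leaves t0 \<and> length ts = leaves t0 \<and> graft t0 ts = t}"
    by (auto simp: decomps_def)
  moreover have "sum ?f (decomps t - ?B) = sum ?f {(Leaf, [t])}"
  proof (rule sum.mono_neutral_right)
    show "finite (decomps t - ?B)" using finite_decomps by simp
    show "{(Leaf, [t])} \<subseteq> decomps t - ?B" by (simp add: decomps_def)
    show "\<forall>x\<in>decomps t - ?B - {(Leaf, [t])}. ?f x = 0"
    proof
      fix x assume x: "x \<in> decomps t - ?B - {(Leaf, [t])}"
      obtain t0 ts where x_eq: "x = (t0, ts)" by (cases x)
      then have "leaves t0 = 1" using x leaves_pos[of t0] by auto
      moreover have "t0 \<noteq> Leaf" using x x_eq Leaf_mem_decomps_iff by auto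
      ultimately show "?f x = 0" using GS_one_leaf_eq_S0[OF assms] x_eq by (simp add: S0_def)
    qed
  qed
  moreover have "p Leaf = 1" using assms by (simp add: GS_def)
  ultimately show ?thesis by (simp add: subst_def add.commute)
qed

lemma comp_eq_subst_full: "p \<in> GS \<Longrightarrow> comp p q = subst_full p (\<lambda>n i. q)"
  by (simp add: fun_eq_iff comp_def splus_def subst_full_eq_subst)

lemma dashv_eq_subst_full:
  "p \<in> GS \<Longrightarrow> dashv p q = subst_full p (\<lambda>n i. if i < n - 1 then q else S0)"
  by (simp add: fun_eq_iff dashv_def splus_def subst_full_eq_subst)

lemma vdash_eq_subst_full:
  "p \<in> GS \<Longrightarrow> vdash p q = subst_full p (\<lambda>n i. if i < n - 1 then S0 else q)"
  by (simp add: fun_eq_iff vdash_def splus_def subst_full_eq_subst)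

lemma subst_full_S0_family: "subst_full p (\<lambda>n i. S0) = p"
proof
  fix t
  let ?f = "\<lambda>(t0, ts). p t0 * (\<Prod>i<leaves t0. (S0 (ts ! i) :: 'a))"
  let ?x = "(t, replicate (leaves t) Leaf)"
  have "subst_full p (\<lambda>n i. S0) t = sum ?f {?x}"
  proof (unfold subst_full_def, rule sum.mono_neutral_right[OF finite_decomps])
    show "{?x} \<subseteq> decomps t" by (simp add: decomps_def graft_replicate_Leaf)
    show "\<forall>x\<in>decomps t - {?x}. ?f x = 0"
    proof
      fix x assume x: "x \<in> decomps t - {?x}"
      obtain t0 ts where x_eq: "x = (t0, ts)" by (cases x)
      with x have l: "length ts = leaves t0" and g: "graft t0 ts = t" by (auto simp: decomps_def)
      have "ts \<noteq> replicate (leaves t0) Leaf"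
        using x x_eq g graft_replicate_Leaf by auto
      then obtain i where "i < leaves t0" "ts ! i \<noteq> Leaf"
        using l by (auto simp: list_eq_iff_nth_eq)
      then show "?f x = 0" using x_eq by (auto simp: S0_def intro!: prod_zero)
    qed
  qed
  then show "subst_full p (\<lambda>n i. S0) t = p t" by (simp add: S0_def)
qed

lemma subst_full_S0: "subst_full S0 Q t = Q 1 0 t"
proof -
  have "subst S0 Q t = 0"
    unfolding subst_def by (rule sum.neutral) (auto simp: S0_def)
  then show ?thesis using subst_full_eq_subst[OF S0_in_GS, of Q t] by simp
qed

lemma subst_full_in_GS:
  assumes p: "p \<in> GS" and Q: "\<And>n i. Q n i \<in> GS"
  shows "subst_full p Q \<in> GS"
proof -
  have "subst_full p Q Leaf = 1"
    using p Q by (simp add: subst_full_def decomps_Leaf GS_def)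
  moreover have "subst_full p Q t = 0" if "\<not> reduced t" for t
    unfolding subst_full_def
  proof (rule sum.neutral, rule ballI)
    fix x assume "x \<in> decomps t"
    then obtain t0 ts where x: "x = (t0, ts)" and l: "length ts = leaves t0" and g: "graft t0 ts = t"
      by (auto simp: decomps_def)
    have "p t0 * (\<Prod>i<leaves t0. Q (leaves t0) i (ts ! i)) = 0"
    proof (cases "reduced t0")
      case False
      then show ?thesis using p by (auto simp: GS_def)
    next
      case True
      then obtain u where "u \<in> set ts" "\<not> reduced u"
        using reduced_graft[OF l] g \<open>\<not> reduced t\<close> by blast
      then obtain i where i: "i < length ts" "\<not> reduced (ts ! i)" by (auto simp: in_set_conv_nth)
      then have "Q (leaves t0) i (ts ! i) = 0" using Q[of "leaves t0" i] by (auto simp: GS_def)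
      then show ?thesis using i l by (auto intro!: prod_zero)
    qed
    then show "(case x of (t0, ts) \<Rightarrow> p t0 * (\<Prod>i<leaves t0. Q (leaves t0) i (ts ! i))) = 0"
      by (simp add: x)
  qed
  ultimately show ?thesis by (auto simp: GS_def)
qed

section \<open>Associativity of substitution\<close>

text \<open>A two-level decomposition of \<open>t\<close> is read either from the base,
  \<open>t = (t\<^sub>0 \<circ> ts) \<circ> us\<close>, or from the branches, \<open>t = t\<^sub>0 \<circ> (ts\<^sub>k \<circ> ws\<^sub>k)\<^sub>k\<close>;
  associativity of grafting puts the two readings in bijection.\<close>

definition decomps_base :: "tree \<Rightarrow> ((tree \<times> tree list) \<times> (tree \<times> tree list)) set" where
  "decomps_base t = Sigma (decomps t) (\<lambda>a. decomps (fst a))"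

definition decomps_branches :: "tree \<Rightarrow> ((tree \<times> tree list) \<times> (nat \<Rightarrow> tree \<times> tree list)) set" where
  "decomps_branches t = Sigma (decomps t) (\<lambda>a. PiE {..<leaves (fst a)} (\<lambda>k. decomps (snd a ! k)))"

definition merge_branches ::
    "(tree \<times> tree list) \<times> (nat \<Rightarrow> tree \<times> tree list) \<Rightarrow> (tree \<times> tree list) \<times> (tree \<times> tree list)" where
  "merge_branches = (\<lambda>((t0, vs), c).
     ((graft t0 (map (\<lambda>k. fst (c k)) [0..<leaves t0]), concat (map (\<lambda>k. snd (c k)) [0..<leaves t0])),
      (t0, map (\<lambda>k. fst (c k)) [0..<leaves t0])))"

definition split_base ::
    "(tree \<times> tree list) \<times> (tree \<times> tree list) \<Rightarrow> (tree \<times> tree list) \<times> (nat \<Rightarrow> tree \<times> tree list)" where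
  "split_base = (\<lambda>((s, us), (t0, ts)).
     let css = chunks (map leaves ts) us
     in ((t0, map2 graft ts css), restrict (\<lambda>k. (ts ! k, css ! k)) {..<leaves t0}))"

lemma decomps_branchesD:
  assumes y: "((t0, vs), c) \<in> decomps_branches t"
  defines "TS \<equiv> map (\<lambda>k. fst (c k)) [0..<leaves t0]" and "WS \<equiv> map (\<lambda>k. snd (c k)) [0..<leaves t0]"
  shows "length TS = leaves t0" "length WS = leaves t0"
    "map length WS = map leaves TS" "map2 graft TS WS = vs"
    "graft (graft t0 TS) (concat WS) = t" "length (concat WS) = leaves (graft t0 TS)"
    "restrict (\<lambda>k. (TS ! k, WS ! k)) {..<leaves t0} = c"
    "merge_branches ((t0, vs), c) = ((graft t0 TS, concat WS), (t0, TS))"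
proof -
  have d: "(t0, vs) \<in> decomps t" and c: "c \<in> PiE {..<leaves t0} (\<lambda>k. decomps (vs ! k))"
    using y by (auto simp: decomps_branches_def)
  have "c k \<in> decomps (vs ! k)" if "k < leaves t0" for k
    using c that by auto
  then have ck: "length (WS ! k) = leaves (TS ! k)" "graft (TS ! k) (WS ! k) = vs ! k" if "k < leaves t0" for k
    using that by (auto simp: TS_def WS_def decomps_def split_beta)
  show l: "length TS = leaves t0" "length WS = leaves t0" by (simp_all add: TS_def WS_def)
  show m: "map length WS = map leaves TS" using l ck by (intro nth_equalityI) auto
  have "length vs = leaves t0" using d by (simp add: decomps_def)
  then show "map2 graft TS WS = vs" using l ck by (intro nth_equalityI) auto
  then show "graft (graft t0 TS) (concat WS) = t"
    using graft_assoc[OF l(1) m] d by (simp add: decomps_def)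
  show "length (concat WS) = leaves (graft t0 TS)"
    using l m by (simp add: length_concat leaves_graft)
  show "restrict (\<lambda>k. (TS ! k, WS ! k)) {..<leaves t0} = c"
  proof
    fix k show "restrict (\<lambda>k. (TS ! k, WS ! k)) {..<leaves t0} k = c k"
      using c by (cases "k < leaves t0") (auto simp: TS_def WS_def PiE_def extensional_def)
  qed
  show "merge_branches ((t0, vs), c) = ((graft t0 TS, concat WS), (t0, TS))"
    by (simp add: merge_branches_def TS_def WS_def)
qed

lemma decomps_baseD:
  assumes x: "((s, us), (t0, ts)) \<in> decomps_base t"
  defines "css \<equiv> chunks (map leaves ts) us"
  shows "length ts = leaves t0" "graft t0 ts = s"
    "map length css = map leaves ts" "concat css = us"
    "graft t0 (map2 graft ts css) = t"
    "split_base ((s, us), (t0, ts)) = ((t0, map2 graft ts css), restrict (\<lambda>k. (ts ! k, css ! k)) {..<leaves t0})"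
proof -
  have d1: "(s, us) \<in> decomps t" and d2: "(t0, ts) \<in> decomps s"
    using x by (auto simp: decomps_base_def)
  show l: "length ts = leaves t0" and g: "graft t0 ts = s" using d2 by (auto simp: decomps_def)
  have lu: "length us = sum_list (map leaves ts)" using d1 g leaves_graft[OF l] by (auto simp: decomps_def)
  show m: "map length css = map leaves ts" using lu by (simp add: css_def map_length_chunks)
  show cc: "concat css = us" using lu by (simp add: css_def concat_chunks)
  show "graft t0 (map2 graft ts css) = t"
    using graft_assoc[OF l m] g cc d1 by (simp add: decomps_def)
  show "split_base ((s, us), (t0, ts)) = ((t0, map2 graft ts css), restrict (\<lambda>k. (ts ! k, css ! k)) {..<leaves t0})"
    by (simp add: split_base_def css_def Let_def)
qed

lemma bij_betw_merge_branches: "bij_betw merge_branches (decomps_branches t) (decomps_base t)"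
proof (rule bij_betw_byWitness[where f' = split_base])
  have merge_in: "merge_branches y \<in> decomps_base t"
    and split_merge: "split_base (merge_branches y) = y" if y: "y \<in> decomps_branches t" for y
  proof -
    obtain t0 vs c where y_eq: "y = ((t0, vs), c)" by (metis prod.collapse)
    define TS where "TS = map (\<lambda>k. fst (c k)) [0..<leaves t0]"
    define WS where "WS = map (\<lambda>k. snd (c k)) [0..<leaves t0]"
    note F = decomps_branchesD[OF y[unfolded y_eq], folded TS_def WS_def]
    have x: "((graft t0 TS, concat WS), (t0, TS)) \<in> decomps_base t"
      using F(1,5,6) by (simp add: decomps_base_def decomps_def)
    then show "merge_branches y \<in> decomps_base t" using F(8) y_eq by simp
    have "chunks (map leaves TS) (concat WS) = WS" using F(3) by (metis chunks_concat)
    then show "split_base (merge_branches y) = y"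
      using decomps_baseD(6)[OF x] F(4,7,8) y_eq by simp
  qed
  have split_in: "split_base x \<in> decomps_branches t"
    and merge_split: "merge_branches (split_base x) = x" if x: "x \<in> decomps_base t" for x
  proof -
    obtain s us t0 ts where x_eq: "x = ((s, us), (t0, ts))" by (metis prod.collapse)
    define css where "css = chunks (map leaves ts) us"
    note G = decomps_baseD[OF x[unfolded x_eq], folded css_def]
    have lc: "length css = leaves t0" using G(1) by (simp add: css_def)
    have lck: "k < leaves t0 \<Longrightarrow> length (css ! k) = leaves (ts ! k)" for k
      using G(1,3) lc by (metis nth_map)
    show "split_base x \<in> decomps_branches t"
      using G(1,5,6) x_eq lc lck by (auto simp: decomps_branches_def decomps_def)
    have "map (\<lambda>k. fst (restrict (\<lambda>k. (ts ! k, css ! k)) {..<leaves t0} k)) [0..<leaves t0] = ts"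
      "map (\<lambda>k. snd (restrict (\<lambda>k. (ts ! k, css ! k)) {..<leaves t0} k)) [0..<leaves t0] = css"
      using G(1) lc by (auto intro!: nth_equalityI)
    then show "merge_branches (split_base x) = x"
      using G(2,4,6) x_eq by (simp add: merge_branches_def)
  qed
  show "\<forall>y\<in>decomps_branches t. split_base (merge_branches y) = y" using split_merge by blast
  show "\<forall>x\<in>decomps_base t. merge_branches (split_base x) = x" using merge_split by blast
  show "merge_branches ` decomps_branches t \<subseteq> decomps_base t" using merge_in by blast
  show "split_base ` decomps_base t \<subseteq> decomps_branches t" using split_in by blast
qed

text \<open>The hypothesis on \<open>R\<close> and \<open>Rl\<close> says that position \<open>sum_list (take i ms) + j\<close> of a
  substitution into a tree whose leaves are grouped in blocks of sizes \<open>ms\<close> carries the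
  series that \<open>Rl\<close> assigns to position \<open>j\<close> of block \<open>i\<close>.\<close>

lemma prod_concat_blocks:
  fixes R :: "nat \<Rightarrow> nat \<Rightarrow> 'b \<Rightarrow> 'a::comm_monoid_mult"
  assumes R: "\<And>ms i j. \<forall>m\<in>set ms. 0 < m \<Longrightarrow> i < length ms \<Longrightarrow> j < ms ! i \<Longrightarrow>
      R (sum_list ms) (sum_list (take i ms) + j) = Rl (length ms) i (ms ! i) j"
    and ne: "\<forall>ws\<in>set WS. ws \<noteq> []"
  shows "(\<Prod>k<length (concat WS). R (length (concat WS)) k (concat WS ! k)) =
    (\<Prod>i<length WS. \<Prod>j<length (WS ! i). Rl (length WS) i (length (WS ! i)) j (WS ! i ! j))"
proof -
  let ?ms = "map length WS"
  have pos: "\<forall>m\<in>set ?ms. 0 < m" using ne by auto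
  have "(\<Prod>k<length (concat WS). R (length (concat WS)) k (concat WS ! k)) =
      (\<Prod>i<length WS. \<Prod>j<length (WS ! i). R (sum_list ?ms) (sum_list (take i ?ms) + j) (WS ! i ! j))"
    using prod_concat[of "R (length (concat WS))" WS] by (simp add: length_concat)
  also have "\<dots> = (\<Prod>i<length WS. \<Prod>j<length (WS ! i). Rl (length WS) i (length (WS ! i)) j (WS ! i ! j))"
    using R[OF pos] by (intro prod.cong refl) simp
  finally show ?thesis .
qed

lemma subst_full_assoc:
  fixes p :: "'a::field series"
  assumes R: "\<And>ms i j. \<forall>m\<in>set ms. 0 < m \<Longrightarrow> i < length ms \<Longrightarrow> j < ms ! i \<Longrightarrow>
      R (sum_list ms) (sum_list (take i ms) + j) = Rl (length ms) i (ms ! i) j"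
  shows "subst_full (subst_full p Q) R = subst_full p (\<lambda>n i. subst_full (Q n i) (Rl n i))"
proof
  fix t
  define weight_base where "weight_base = (\<lambda>x::(tree \<times> tree list) \<times> (tree \<times> tree list).
      p (fst (snd x)) * (\<Prod>i<leaves (fst (snd x)). Q (leaves (fst (snd x))) i (snd (snd x) ! i)) *
      (\<Prod>k<leaves (fst (fst x)). R (leaves (fst (fst x))) k (snd (fst x) ! k)))"
  define weight_branches where "weight_branches = (\<lambda>y::(tree \<times> tree list) \<times> (nat \<Rightarrow> tree \<times> tree list).
      p (fst (fst y)) * (\<Prod>i<leaves (fst (fst y)). Q (leaves (fst (fst y))) i (fst (snd y i)) *
        (\<Prod>j<leaves (fst (snd y i)). Rl (leaves (fst (fst y))) i (leaves (fst (snd y i))) j (snd (snd y i) ! j))))"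
  have "subst_full (subst_full p Q) R t = (\<Sum>a\<in>decomps t. \<Sum>b\<in>decomps (fst a). weight_base (a, b))"
    unfolding subst_full_def weight_base_def by (simp add: split_beta sum_distrib_right)
  also have "\<dots> = sum weight_base (decomps_base t)"
    unfolding decomps_base_def by (subst sum.Sigma) (simp_all add: finite_decomps split_beta)
  also have "\<dots> = sum (weight_base \<circ> merge_branches) (decomps_branches t)"
    by (simp add: comp_def sum.reindex_bij_betw[OF bij_betw_merge_branches])
  also have "\<dots> = sum weight_branches (decomps_branches t)"
  proof (rule sum.cong[OF refl])
    fix y assume y: "y \<in> decomps_branches t"
    obtain t0 vs c where y_eq: "y = ((t0, vs), c)" by (metis prod.collapse)
    define TS where "TS = map (\<lambda>k. fst (c k)) [0..<leaves t0]"
    define WS where "WS = map (\<lambda>k. snd (c k)) [0..<leaves t0]"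
    note F = decomps_branchesD[OF y[unfolded y_eq], folded TS_def WS_def]
    have len: "i < leaves t0 \<Longrightarrow> length (WS ! i) = leaves (TS ! i)" for i
      using F(1-3) by (metis nth_map)
    have "\<forall>ws\<in>set WS. ws \<noteq> []"
    proof
      fix ws assume "ws \<in> set WS"
      then obtain i where "i < leaves t0" "ws = WS ! i" using F(2) by (auto simp: in_set_conv_nth)
      then show "ws \<noteq> []" using len[of i] leaves_pos[of "TS ! i"] by auto
    qed
    then have "(\<Prod>k<leaves (graft t0 TS). R (leaves (graft t0 TS)) k (concat WS ! k)) =
        (\<Prod>i<leaves t0. \<Prod>j<length (WS ! i). Rl (leaves t0) i (length (WS ! i)) j (WS ! i ! j))"
      using prod_concat_blocks[of R Rl WS, OF R] F(2,6) by simp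
    also have "\<dots> = (\<Prod>i<leaves t0. \<Prod>j<leaves (TS ! i). Rl (leaves t0) i (leaves (TS ! i)) j (WS ! i ! j))"
      by (intro prod.cong refl) (simp_all add: len)
    finally have R_blocks: "(\<Prod>k<leaves (graft t0 TS). R (leaves (graft t0 TS)) k (concat WS ! k)) = \<dots>" .
    have "(weight_base \<circ> merge_branches) y = p t0 * (\<Prod>i<leaves t0. Q (leaves t0) i (TS ! i)) *
        (\<Prod>k<leaves (graft t0 TS). R (leaves (graft t0 TS)) k (concat WS ! k))"
      using F(1,8) by (simp add: weight_base_def y_eq)
    also have "\<dots> = p t0 * (\<Prod>i<leaves t0. Q (leaves t0) i (TS ! i) *
        (\<Prod>j<leaves (TS ! i). Rl (leaves t0) i (leaves (TS ! i)) j (WS ! i ! j)))"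
      unfolding R_blocks by (simp add: prod.distrib mult.assoc)
    also have "\<dots> = weight_branches y"
      unfolding weight_branches_def y_eq by (simp add: TS_def WS_def)
    finally show "(weight_base \<circ> merge_branches) y = weight_branches y" .
  qed
  also have "\<dots> = (\<Sum>a\<in>decomps t. \<Sum>c\<in>PiE {..<leaves (fst a)} (\<lambda>k. decomps (snd a ! k)). weight_branches (a, c))"
    unfolding decomps_branches_def by (subst sum.Sigma) (simp_all add: finite_decomps finite_PiE split_beta)
  also have "\<dots> = subst_full p (\<lambda>n i. subst_full (Q n i) (Rl n i)) t"
    unfolding subst_full_def weight_branches_def
    by (intro sum.cong refl) (simp add: split_beta prod_sum_PiE finite_decomps sum_distrib_left)
  finally show "subst_full (subst_full p Q) R t = subst_full p (\<lambda>n i. subst_full (Q n i) (Rl n i)) t" .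
qed

section \<open>The products \<open>\<circ>\<close>, \<open>\<stileturn>\<close> and \<open>\<turnstile>\<close>\<close>

lemma comp_in_GS: "p \<in> GS \<Longrightarrow> q \<in> GS \<Longrightarrow> comp p q \<in> GS"
  by (simp add: comp_eq_subst_full subst_full_in_GS)

lemma dashv_in_GS: "p \<in> GS \<Longrightarrow> q \<in> GS \<Longrightarrow> dashv p q \<in> GS"
  by (simp add: dashv_eq_subst_full subst_full_in_GS S0_in_GS)

lemma vdash_in_GS: "p \<in> GS \<Longrightarrow> q \<in> GS \<Longrightarrow> vdash p q \<in> GS"
  by (simp add: vdash_eq_subst_full subst_full_in_GS S0_in_GS)

lemma comp_S0_left [simp]: "comp S0 p = p"
  by (simp add: fun_eq_iff comp_eq_subst_full[OF S0_in_GS] subst_full_S0)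

lemma comp_S0_right: "p \<in> GS \<Longrightarrow> comp p S0 = p"
  by (simp add: comp_eq_subst_full subst_full_S0_family)

lemma vdash_S0_left [simp]: "vdash S0 p = p"
  by (simp add: fun_eq_iff vdash_eq_subst_full[OF S0_in_GS] subst_full_S0)

lemma vdash_S0_right: "p \<in> GS \<Longrightarrow> vdash p S0 = p"
  by (simp add: vdash_eq_subst_full subst_full_S0_family)

lemma dashv_S0_right: "p \<in> GS \<Longrightarrow> dashv p S0 = p"
  by (simp add: dashv_eq_subst_full subst_full_S0_family)

lemma comp_assoc:
  assumes "p \<in> GS" "q \<in> GS" "r \<in> GS"
  shows "comp (comp p q) r = comp p (comp q r)"
proof -
  have "comp (comp p q) r = subst_full (subst_full p (\<lambda>n i. q)) (\<lambda>n i. r)"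
    by (subst comp_eq_subst_full[OF comp_in_GS[OF assms(1,2)]]) (simp only: comp_eq_subst_full[OF assms(1)])
  also have "\<dots> = subst_full p (\<lambda>n i. subst_full q (\<lambda>m j. r))"
    by (rule subst_full_assoc) simp
  finally show ?thesis using assms by (simp add: comp_eq_subst_full)
qed

text \<open>In the three remaining identities the family of the outer substitution singles out
  the last position, and the last position of a concatenation of blocks is the last position
  of the last block.\<close>

lemma vdash_assoc:
  assumes "p \<in> GS" "q \<in> GS" "r \<in> GS"
  shows "vdash (vdash p q) r = vdash p (vdash q r)"
proof -
  have "vdash (vdash p q) r = subst_full (subst_full p (\<lambda>n i. if i < n - 1 then S0 else q))
      (\<lambda>n i. if i < n - 1 then S0 else r)"
    by (subst vdash_eq_subst_full[OF vdash_in_GS[OF assms(1,2)]]) (simp only: vdash_eq_subst_full[OF assms(1)])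
  also have "\<dots> = subst_full p (\<lambda>n i. subst_full (if i < n - 1 then S0 else q)
      (\<lambda>m j. if i < n - 1 \<or> j < m - 1 then S0 else r))"
    by (rule subst_full_assoc) (simp only: block_position_less_last_iff)
  also have "(\<lambda>n i. subst_full (if i < n - 1 then S0 else q)
      (\<lambda>m j. if i < n - 1 \<or> j < m - 1 then S0 else r)) = (\<lambda>n i. if i < n - 1 then S0 else vdash q r)"
    using assms by (auto simp: fun_eq_iff subst_full_S0 vdash_eq_subst_full)
  also have "subst_full p \<dots> = vdash p (vdash q r)"
    by (rule vdash_eq_subst_full[OF assms(1), symmetric])
  finally show ?thesis .
qed

lemma dashv_dashv_eq_dashv_comp:
  assumes "p \<in> GS" "q \<in> GS" "r \<in> GS"
  shows "dashv (dashv p q) r = dashv p (comp q r)"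
proof -
  have "dashv (dashv p q) r = subst_full (subst_full p (\<lambda>n i. if i < n - 1 then q else S0))
      (\<lambda>n i. if i < n - 1 then r else S0)"
    by (subst dashv_eq_subst_full[OF dashv_in_GS[OF assms(1,2)]]) (simp only: dashv_eq_subst_full[OF assms(1)])
  also have "\<dots> = subst_full p (\<lambda>n i. subst_full (if i < n - 1 then q else S0)
      (\<lambda>m j. if i < n - 1 \<or> j < m - 1 then r else S0))"
    by (rule subst_full_assoc) (simp only: block_position_less_last_iff)
  also have "(\<lambda>n i. subst_full (if i < n - 1 then q else S0)
      (\<lambda>m j. if i < n - 1 \<or> j < m - 1 then r else S0)) = (\<lambda>n i. if i < n - 1 then comp q r else S0)"
    using assms by (auto simp: fun_eq_iff subst_full_S0 comp_eq_subst_full)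
  also have "subst_full p \<dots> = dashv p (comp q r)"
    by (rule dashv_eq_subst_full[OF assms(1), symmetric])
  finally show ?thesis .
qed

lemma vdash_dashv_eq_comp:
  assumes "p \<in> GS" "q \<in> GS"
  shows "vdash (dashv p q) q = comp p q"
proof -
  have "vdash (dashv p q) q = subst_full (subst_full p (\<lambda>n i. if i < n - 1 then q else S0))
      (\<lambda>n i. if i < n - 1 then S0 else q)"
    by (subst vdash_eq_subst_full[OF dashv_in_GS[OF assms]]) (simp only: dashv_eq_subst_full[OF assms(1)])
  also have "\<dots> = subst_full p (\<lambda>n i. subst_full (if i < n - 1 then q else S0)
      (\<lambda>m j. if i < n - 1 \<or> j < m - 1 then S0 else q))"
    by (rule subst_full_assoc) (simp only: block_position_less_last_iff)
  also have "(\<lambda>n i. subst_full (if i < n - 1 then q else S0)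
      (\<lambda>m j. if i < n - 1 \<or> j < m - 1 then S0 else q)) = (\<lambda>n i. q)"
    by (auto simp: fun_eq_iff subst_full_S0 subst_full_S0_family)
  finally show ?thesis using assms by (simp add: comp_eq_subst_full)
qed

section \<open>Right inverses\<close>

text \<open>A right inverse \<open>x\<close> of \<open>p\<close> for \<open>subst_full p (masked sel x) = S\<^sub>0\<close> solves
  \<open>x = S\<^sub>0 - subst p (masked sel x)\<close>. The degree \<open>\<ge> 2\<close> part only reads \<open>x\<close> on trees with
  fewer leaves, so the fixed point is reached on trees with at most \<open>k\<close> leaves after \<open>k\<close>
  iterations.\<close>

definition masked :: "(nat \<Rightarrow> nat \<Rightarrow> bool) \<Rightarrow> 'a::field series \<Rightarrow> nat \<Rightarrow> nat \<Rightarrow> 'a series" where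
  "masked sel x = (\<lambda>n i. if sel n i then x else S0)"

lemma subst_masked_cong:
  assumes "\<And>u. leaves u < leaves t \<Longrightarrow> x u = y u"
  shows "subst p (masked sel x) t = subst p (masked sel y) t"
proof -
  have "(\<Prod>i<leaves t0. masked sel x (leaves t0) i (ts ! i)) =
      (\<Prod>i<leaves t0. masked sel y (leaves t0) i (ts ! i))"
    if "2 \<le> leaves t0" "length ts = leaves t0" "graft t0 ts = t" for t0 ts
    using assms leaves_less_of_graft[OF that(1,2)] that by (intro prod.cong refl) (simp add: masked_def)
  then show ?thesis
    unfolding subst_def by (intro sum.cong refl) clarsimp
qed

fun right_inv_approx :: "'a::field series \<Rightarrow> (nat \<Rightarrow> nat \<Rightarrow> bool) \<Rightarrow> nat \<Rightarrow> 'a series" where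
  "right_inv_approx p sel 0 = S0"
| "right_inv_approx p sel (Suc k) = (\<lambda>t. S0 t - subst p (masked sel (right_inv_approx p sel k)) t)"

lemma right_inv_approx_stable:
  "leaves t \<le> a \<Longrightarrow> leaves t \<le> b \<Longrightarrow> right_inv_approx p sel a t = right_inv_approx p sel b t"
proof (induction a arbitrary: b t)
  case (0 b t)
  then show ?case using leaves_pos[of t] by simp
next
  case (Suc a b t)
  then obtain b' where b: "b = Suc b'" using leaves_pos[of t] by (cases b) auto
  have "subst p (masked sel (right_inv_approx p sel a)) t = subst p (masked sel (right_inv_approx p sel b')) t"
    by (rule subst_masked_cong) (use Suc b in auto)
  then show ?case using b by simp
qed

definition right_inv :: "'a::field series \<Rightarrow> (nat \<Rightarrow> nat \<Rightarrow> bool) \<Rightarrow> 'a series" where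
  "right_inv p sel = (\<lambda>t. right_inv_approx p sel (leaves t) t)"

lemma right_inv_eq: "right_inv p sel t = S0 t - subst p (masked sel (right_inv p sel)) t"
proof -
  obtain a where a: "leaves t = Suc a" using leaves_pos[of t] by (cases "leaves t") auto
  have "subst p (masked sel (right_inv_approx p sel a)) t = subst p (masked sel (right_inv p sel)) t"
  proof (rule subst_masked_cong)
    fix u assume "leaves u < leaves t"
    then show "right_inv_approx p sel a u = right_inv p sel u"
      unfolding right_inv_def using a by (intro right_inv_approx_stable) auto
  qed
  then show ?thesis using a by (simp add: right_inv_def)
qed

lemma subst_full_masked_right_inv:
  "p \<in> GS \<Longrightarrow> sel 1 0 \<Longrightarrow> subst_full p (masked sel (right_inv p sel)) = S0"
  using right_inv_eq[of p sel] by (simp add: fun_eq_iff subst_full_eq_subst masked_def)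

lemma subst_Leaf: "subst p Q Leaf = 0"
proof -
  have "leaves t0 = 1" if "length ts = leaves t0" "graft t0 ts = Leaf" for t0 ts
  proof -
    have "(t0, ts) \<in> decomps Leaf" using that by (simp add: decomps_def)
    then show ?thesis by (simp add: decomps_Leaf)
  qed
  then have "{(t0, ts). 2 \<le> leaves t0 \<and> length ts = leaves t0 \<and> graft t0 ts = Leaf} = {}"
    by fastforce
  then show ?thesis unfolding subst_def by (simp only: sum.empty)
qed

lemma right_inv_in_GS:
  assumes p: "p \<in> GS"
  shows "right_inv p sel \<in> GS"
proof -
  have "right_inv p sel t = 0" if "\<not> reduced t" for t
    using that
  proof (induction "leaves t" arbitrary: t rule: less_induct)
    case less
    have "subst p (masked sel (right_inv p sel)) t = 0"
      unfolding subst_def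
    proof (rule sum.neutral, rule ballI)
      fix x assume "x \<in> {(t0, ts). 2 \<le> leaves t0 \<and> length ts = leaves t0 \<and> graft t0 ts = t}"
      then obtain t0 ts where x: "x = (t0, ts)" and t0: "2 \<le> leaves t0" "length ts = leaves t0"
        "graft t0 ts = t" by auto
      have "p t0 * (\<Prod>i<leaves t0. masked sel (right_inv p sel) (leaves t0) i (ts ! i)) = 0"
      proof (cases "reduced t0")
        case False
        then show ?thesis using p by (auto simp: GS_def)
      next
        case True
        then obtain u where "u \<in> set ts" "\<not> reduced u"
          using reduced_graft[OF t0(2)] t0(3) less.prems by blast
        then obtain i where i: "i < length ts" "\<not> reduced (ts ! i)" by (auto simp: in_set_conv_nth)
        then have "right_inv p sel (ts ! i) = 0"
          using less.hyps leaves_less_of_graft[OF t0(1,2)] t0(3) by blast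
        moreover have "ts ! i \<noteq> Leaf" using i by auto
        ultimately have "masked sel (right_inv p sel) (leaves t0) i (ts ! i) = 0"
          by (simp add: masked_def S0_def)
        then show ?thesis using i t0(2) by (auto intro!: prod_zero)
      qed
      then show "(case x of (t0, ts) \<Rightarrow> p t0 * (\<Prod>i<leaves t0. masked sel (right_inv p sel) (leaves t0) i (ts ! i))) = 0"
        by (simp add: x)
    qed
    then show ?case using right_inv_eq[of p sel t] less.prems by (auto simp: S0_def)
  qed
  moreover have "right_inv p sel Leaf = 1"
    using right_inv_eq[of p sel Leaf] by (simp add: subst_Leaf S0_def)
  ultimately show ?thesis by (auto simp: GS_def)
qed

lemma comp_right_inverse: "p \<in> GS \<Longrightarrow> \<exists>x\<in>GS. comp p x = S0"
  using subst_full_masked_right_inv[of p "\<lambda>n i. True"] right_inv_in_GS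
  by (auto simp: comp_eq_subst_full masked_def)

lemma vdash_right_inverse: "p \<in> GS \<Longrightarrow> \<exists>x\<in>GS. vdash p x = S0"
proof -
  assume p: "p \<in> GS"
  define sel where "sel = (\<lambda>n i::nat. \<not> i < n - 1)"
  define x where "x = right_inv p sel"
  have "masked sel x = (\<lambda>n i. if i < n - 1 then S0 else x)"
    by (simp add: masked_def sel_def fun_eq_iff)
  then have "vdash p x = subst_full p (masked sel x)"
    by (simp only: vdash_eq_subst_full[OF p])
  also have "\<dots> = S0"
    unfolding x_def by (rule subst_full_masked_right_inv[OF p]) (simp add: sel_def)
  finally show ?thesis using right_inv_in_GS[OF p] x_def by blast
qed

section \<open>The two group structures\<close>

lemma (in monoid) group_r_invI:
  assumes r_inv_ex: "\<And>x. x \<in> carrier G \<Longrightarrow> \<exists>y\<in>carrier G. x \<otimes> y = \<one>"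
  shows "group G"
proof (rule group_l_invI)
  fix x assume x: "x \<in> carrier G"
  then obtain y where y: "y \<in> carrier G" "x \<otimes> y = \<one>" using r_inv_ex by blast
  then obtain z where z: "z \<in> carrier G" "y \<otimes> z = \<one>" using r_inv_ex by blast
  have "x = x \<otimes> (y \<otimes> z)" using x z by simp
  also have "\<dots> = (x \<otimes> y) \<otimes> z" by (rule m_assoc[OF x y(1) z(1), symmetric])
  also have "\<dots> = z" using y z by simp
  finally show "\<exists>y\<in>carrier G. y \<otimes> x = \<one>" using y z by blast
qed

definition comp_group :: "'a::field series monoid" where
  "comp_group = \<lparr>carrier = GS, mult = comp, one = S0\<rparr>"

definition vdash_group :: "'a::field series monoid" where
  "vdash_group = \<lparr>carrier = GS, mult = vdash, one = S0\<rparr>"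

lemma group_comp_group: "group comp_group"
proof -
  have "monoid comp_group"
    by (rule monoidI) (auto simp: comp_group_def comp_in_GS S0_in_GS comp_S0_right comp_assoc)
  then show ?thesis
    by (rule monoid.group_r_invI) (simp add: comp_group_def comp_right_inverse)
qed

lemma group_vdash_group: "group vdash_group"
proof -
  have "monoid vdash_group"
    by (rule monoidI) (auto simp: vdash_group_def vdash_in_GS S0_in_GS vdash_S0_right vdash_assoc)
  then show ?thesis
    by (rule monoid.group_r_invI) (simp add: vdash_group_def vdash_right_inverse)
qed

lemma comp_inv_eq_m_inv: "comp_inv f = inv\<^bsub>comp_group\<^esub> f"
  by (simp add: comp_inv_def m_inv_def comp_group_def)

lemma vdash_inv_eq_m_inv: "vdash_inv f = inv\<^bsub>vdash_group\<^esub> f"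
  by (simp add: vdash_inv_def m_inv_def vdash_group_def)

theorem mainTheorem3:
  fixes f :: "'a::field series"
  assumes "f \<in> GS"
  shows "f = dashv (RR f) f"
proof -
  interpret C: group "comp_group :: 'a series monoid" by (rule group_comp_group)
  interpret V: group "vdash_group :: 'a series monoid" by (rule group_vdash_group)
  define g where "g = comp_inv f"
  have g: "g \<in> GS" "comp f g = S0" "comp g f = S0"
    using C.inv_closed C.r_inv C.l_inv assms by (simp_all add: g_def comp_inv_eq_m_inv comp_group_def)
  have "vdash (dashv f g) g = S0"
    using vdash_dashv_eq_comp[OF assms g(1)] g(2) by simp
  then have "RR f = dashv f g"
    using V.inv_equality[of "dashv f g" g] g(1) dashv_in_GS[OF assms g(1)]
    by (simp add: RR_def g_def[symmetric] vdash_inv_eq_m_inv vdash_group_def)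
  then have "dashv (RR f) f = dashv f (comp g f)"
    using dashv_dashv_eq_dashv_comp[OF assms g(1) assms] by simp
  then show ?thesis using g(3) dashv_S0_right[OF assms] by simp
qed

end
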